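(* Let $Y=\beta+\sigma\xi\in\mathbb{R}^p$ with $\beta\in\mathbb{R}^p$ unknown, $\sigma>0$ and $\xi\sim\mathcal{N}(0,\mathbb{I}_p)$. Let $q\ge1$, $s<p/4$, and let $\hat\beta^s$ be the estimator $\hat\beta^s_j:=Y_j\mathbf{1}\{|Y_j|\ge t^*_s\}$, $j=1,\dots,p$, where $t^*_s:=\sqrt{2\sigma^2\log(p/s-1)+\sigma^2q\log\log(p/s-1)}$. Then for all $a>0$, $$\sup_{\beta\in\Omega^p_{s,a}}\mathbf{E}_\beta\big(\|\hat\beta^s-\beta\|_q^q\big)\ \le\ C_q\,\Phi_{ad}(a),$$ where $C_q$ is a constant depending only on $q$.
   Context: $\Omega^p_{s,a}=\{\beta\in\mathbb{R}^p:\ |\beta|_0\le s\ \text{and}\ |\beta_i|\ge a\ \forall i\in S_\beta\}$, where $|\beta|_0$ is the number of nonzero entries and $S_\beta$ the set of indices of nonzero entries; $\mathbf{E}_\beta$ is expectation when the true parameter is $\beta$; $\|\cdot\|_q$ is the $\ell_q$ norm. $\sigma_q:=(\mathbf{E}|\zeta|^q)^{1/q}$ for $\zeta\sim\mathcal{N}(0,\sigma^2)$. $a_q(1):=\sqrt{2\sigma^2\log(\frac ps-1)+q\sigma^2\log\log(\frac ps-1)}+\sqrt{q\sigma^2\log\log(\frac ps-1)}$. Define $\Phi_{ad}(a):=\sigma_q^qs$ if $a\ge a_q(1)$, and $\Phi_{ad}(a):=s\sigma^q(2\log(\frac ps-1))^{q/2}$ otherwise. *)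

theory Defs
  imports "HOL-Probability.Probability"
begin

text \<open>Vectors in R^p are represented as functions nat => real; only indices in {..<p} matter.\<close>

definition gauss1 :: "real measure" where
  "gauss1 = density lborel std_normal_density"

definition gaussp :: "nat \<Rightarrow> (nat \<Rightarrow> real) measure" where
  "gaussp p = PiM {..<p} (\<lambda>_. gauss1)"

definition Omega :: "nat \<Rightarrow> nat \<Rightarrow> real \<Rightarrow> (nat \<Rightarrow> real) set" where
  "Omega p s a = {\<beta>. card {i\<in>{..<p}. \<beta> i \<noteq> 0} \<le> s \<and>
                     (\<forall>i\<in>{..<p}. \<beta> i \<noteq> 0 \<longrightarrow> \<bar>\<beta> i\<bar> \<ge> a)}"

definition tstar :: "nat \<Rightarrow> nat \<Rightarrow> real \<Rightarrow> real \<Rightarrow> real" where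
  "tstar p s \<sigma> q = sqrt (2 * \<sigma>\<^sup>2 * ln (real p / real s - 1)
                         + \<sigma>\<^sup>2 * q * ln (ln (real p / real s - 1)))"

definition beta_hat :: "nat \<Rightarrow> nat \<Rightarrow> real \<Rightarrow> real \<Rightarrow> (nat \<Rightarrow> real) \<Rightarrow> nat \<Rightarrow> real" where
  "beta_hat p s \<sigma> q Y j = (if \<bar>Y j\<bar> \<ge> tstar p s \<sigma> q then Y j else 0)"

definition sigma_q_pow :: "real \<Rightarrow> real \<Rightarrow> real" where
  "sigma_q_pow \<sigma> q = (\<integral>x. \<bar>\<sigma> * x\<bar> powr q \<partial>gauss1)"

definition a_q1 :: "nat \<Rightarrow> nat \<Rightarrow> real \<Rightarrow> real \<Rightarrow> real" where
  "a_q1 p s \<sigma> q = sqrt (2 * \<sigma>\<^sup>2 * ln (real p / real s - 1)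
                         + q * \<sigma>\<^sup>2 * ln (ln (real p / real s - 1)))
                  + sqrt (q * \<sigma>\<^sup>2 * ln (ln (real p / real s - 1)))"

definition Phi_ad :: "nat \<Rightarrow> nat \<Rightarrow> real \<Rightarrow> real \<Rightarrow> real \<Rightarrow> real" where
  "Phi_ad p s \<sigma> q a = (if a \<ge> a_q1 p s \<sigma> q then sigma_q_pow \<sigma> q * real s
                        else real s * \<sigma> powr q * (2 * ln (real p / real s - 1)) powr (q / 2))"

text \<open>Risk E_beta ||beta_hat - beta||_q^q, where Y = beta + sigma xi.
  Stated as a nonnegative (ennreal) integral so that integrability is not an issue.\<close>
definition risk :: "nat \<Rightarrow> nat \<Rightarrow> real \<Rightarrow> real \<Rightarrow> (nat \<Rightarrow> real) \<Rightarrow> ennreal" where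
  "risk p s \<sigma> q \<beta> = (\<integral>\<^sup>+ \<xi>. ennreal (\<Sum>j<p.
        \<bar>beta_hat p s \<sigma> q (\<lambda>i. \<beta> i + \<sigma> * \<xi> i) j - \<beta> j\<bar> powr q) \<partial>gaussp p)"

end

(* Hard thresholding acts coordinatewise and the noise coordinates are independent, so the risk
   is a sum of p one-dimensional risks; after rescaling by sigma the noise has unit variance and
   the threshold becomes t = sqrt (2 log r + q log log r) with r = p/s - 1.

   A coordinate with beta_j = 0 costs the tail moment E |xi|^q 1{|xi| >= t}.  Shifting the
   Gaussian density by t bounds it by a multiple of exp (-t^2/2) (t^q + E |xi|^q), and the choice
   of t makes exp (-t^2/2) = (log r)^(-q/2) / r, so this is O(1/r).  Since p/r <= 2s, the null
   coordinates cost O(s) together.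

   A coordinate with |beta_j| >= a costs at most E |xi|^q plus |beta_j|^q times the probability
   that it is thresholded away.  That is O((log r)^(q/2)) for every beta_j, and O(1) once |beta_j|
   exceeds t by sqrt (q log log r): then the probability is at most 2 (log r)^(-q/2), which pays
   for the factor t^q in |beta_j|^q <= 2^q (t^q + (|beta_j| - t)^q). *)

theory Submission
  imports Defs
begin

section \<open>Tails and moments of the standard Gaussian\<close>

lemma prob_space_gauss1: "prob_space gauss1"
  unfolding gauss1_def using prob_space_normal_density[of 1 0] by simp

lemma sets_gauss1 [simp, measurable_cong]: "sets gauss1 = sets borel"
  unfolding gauss1_def by simp

lemma space_gauss1 [simp]: "space gauss1 = UNIV"
  unfolding gauss1_def by simp

lemma nn_integral_gauss1:
  assumes [measurable]: "f \<in> borel_measurable borel"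
  shows "(\<integral>\<^sup>+x. f x \<partial>gauss1) = (\<integral>\<^sup>+x. ennreal (std_normal_density x) * f x \<partial>lborel)"
  unfolding gauss1_def by (subst nn_integral_density) auto

lemma emeasure_gauss1_UNIV [simp]: "emeasure gauss1 UNIV = 1"
  using prob_space.emeasure_space_1[OF prob_space_gauss1] by simp

lemma nn_integral_gauss1_reflect:
  assumes [measurable]: "f \<in> borel_measurable borel"
  shows "(\<integral>\<^sup>+x. f (- x) \<partial>gauss1) = (\<integral>\<^sup>+x. f x \<partial>gauss1)"
proof -
  have "(\<integral>\<^sup>+x. f x \<partial>gauss1) = (\<integral>\<^sup>+x. ennreal (std_normal_density x) * f x \<partial>lborel)"
    by (rule nn_integral_gauss1) measurable
  also have "\<dots> = (\<integral>\<^sup>+x. ennreal (std_normal_density (- x)) * f (- x) \<partial>lborel)"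
    using nn_integral_real_affine[of "\<lambda>x. ennreal (std_normal_density x) * f x" "-1" 0] by simp
  also have "\<dots> = (\<integral>\<^sup>+x. f (- x) \<partial>gauss1)"
    by (subst nn_integral_gauss1) (simp_all add: std_normal_density_def)
  finally show ?thesis ..
qed

lemma std_normal_density_shift_le:
  assumes "0 \<le> t" "0 \<le> u"
  shows "std_normal_density (t + u) \<le> exp (- t\<^sup>2 / 2) * std_normal_density u"
proof -
  have "- (t + u)\<^sup>2 / 2 \<le> - t\<^sup>2 / 2 + - u\<^sup>2 / 2"
    using mult_nonneg_nonneg[OF assms] by (simp add: power2_sum)
  then have "exp (- (t + u)\<^sup>2 / 2) \<le> exp (- t\<^sup>2 / 2) * exp (- u\<^sup>2 / 2)"
    by (simp flip: exp_add)
  then show ?thesis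
    unfolding std_normal_density_def by (simp add: divide_right_mono)
qed

lemma nn_integral_gauss1_upper_tail_le:
  assumes [measurable]: "g \<in> borel_measurable borel" and "0 \<le> t"
  shows "(\<integral>\<^sup>+x. g x * indicator {t..} x \<partial>gauss1)
           \<le> ennreal (exp (- t\<^sup>2 / 2)) * (\<integral>\<^sup>+u. g (t + \<bar>u\<bar>) \<partial>gauss1)"
proof -
  have "(\<integral>\<^sup>+x. g x * indicator {t..} x \<partial>gauss1)
          = (\<integral>\<^sup>+x. ennreal (std_normal_density x) * (g x * indicator {t..} x) \<partial>lborel)"
    by (rule nn_integral_gauss1) measurable
  also have "\<dots> = (\<integral>\<^sup>+u. ennreal (std_normal_density (t + u)) * (g (t + u) * indicator {t..} (t + u)) \<partial>lborel)"
    using nn_integral_real_affine[of "\<lambda>x. ennreal (std_normal_density x) * (g x * indicator {t..} x)" 1 t]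
    by simp
  also have "\<dots> \<le> (\<integral>\<^sup>+u. ennreal (exp (- t\<^sup>2 / 2)) * (ennreal (std_normal_density u) * g (t + \<bar>u\<bar>)) \<partial>lborel)"
  proof (rule nn_integral_mono)
    fix u :: real
    show "ennreal (std_normal_density (t + u)) * (g (t + u) * indicator {t..} (t + u))
            \<le> ennreal (exp (- t\<^sup>2 / 2)) * (ennreal (std_normal_density u) * g (t + \<bar>u\<bar>))"
    proof (cases "0 \<le> u")
      case True
      have "ennreal (std_normal_density (t + u)) \<le> ennreal (exp (- t\<^sup>2 / 2)) * ennreal (std_normal_density u)"
        using std_normal_density_shift_le[OF \<open>0 \<le> t\<close> True]
        by (simp add: normal_density_nonneg flip: ennreal_mult)
      then show ?thesis
        using True by (simp add: mult_right_mono flip: mult.assoc)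
    qed (simp add: indicator_def)
  qed
  also have "\<dots> = exp (- t\<^sup>2 / 2) * (\<integral>\<^sup>+u. g (t + \<bar>u\<bar>) \<partial>gauss1)"
    by (subst nn_integral_cmult) (simp_all add: nn_integral_gauss1)
  finally show ?thesis .
qed

lemma nn_integral_gauss1_abs_tail_le:
  assumes [measurable]: "g \<in> borel_measurable borel" and "0 \<le> t"
  shows "(\<integral>\<^sup>+x. g \<bar>x\<bar> * indicator {x. t \<le> \<bar>x\<bar>} x \<partial>gauss1)
           \<le> 2 * ennreal (exp (- t\<^sup>2 / 2)) * (\<integral>\<^sup>+u. g (t + \<bar>u\<bar>) \<partial>gauss1)"
proof -
  have "(\<integral>\<^sup>+x. g \<bar>x\<bar> * indicator {x. t \<le> \<bar>x\<bar>} x \<partial>gauss1)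
          \<le> (\<integral>\<^sup>+x. g x * indicator {t..} x + g (- x) * indicator {t..} (- x) \<partial>gauss1)"
    using \<open>0 \<le> t\<close> by (intro nn_integral_mono) (auto simp: indicator_def)
  also have "\<dots> = (\<integral>\<^sup>+x. g x * indicator {t..} x \<partial>gauss1) + (\<integral>\<^sup>+x. g (- x) * indicator {t..} (- x) \<partial>gauss1)"
    by (rule nn_integral_add) measurable
  also have "(\<integral>\<^sup>+x. g (- x) * indicator {t..} (- x) \<partial>gauss1) = (\<integral>\<^sup>+x. g x * indicator {t..} x \<partial>gauss1)"
    by (rule nn_integral_gauss1_reflect[of "\<lambda>x. g x * indicator {t..} x"]) measurable
  also have "(\<integral>\<^sup>+x. g x * indicator {t..} x \<partial>gauss1) + (\<integral>\<^sup>+x. g x * indicator {t..} x \<partial>gauss1)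
               = 2 * (\<integral>\<^sup>+x. g x * indicator {t..} x \<partial>gauss1)"
    by (simp add: mult_2)
  also have "\<dots> \<le> 2 * (exp (- t\<^sup>2 / 2) * (\<integral>\<^sup>+u. g (t + \<bar>u\<bar>) \<partial>gauss1))"
    by (intro mult_left_mono nn_integral_gauss1_upper_tail_le assms) simp
  finally show ?thesis by (simp add: mult.assoc)
qed

lemma emeasure_gauss1_abs_ge_le:
  assumes "0 \<le> t"
  shows "emeasure gauss1 {x. t \<le> \<bar>x\<bar>} \<le> ennreal (2 * exp (- t\<^sup>2 / 2))"
  using nn_integral_gauss1_abs_tail_le[of "\<lambda>_. 1" t] assms by (simp add: ennreal_mult)

lemma abs_powr_le_one_plus_power:
  fixes x q :: real
  assumes "0 \<le> q"
  shows "\<bar>x\<bar> powr q \<le> 1 + \<bar>x\<bar> ^ nat \<lceil>q\<rceil>"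
proof (cases "\<bar>x\<bar> \<le> 1")
  case True
  then show ?thesis
    using assms powr_le1[of q "\<bar>x\<bar>"] by (simp add: add_increasing2)
next
  case False
  then have "\<bar>x\<bar> powr q \<le> \<bar>x\<bar> powr (real (nat \<lceil>q\<rceil>))"
    by (intro powr_mono) (auto simp: real_nat_ceiling_ge)
  then show ?thesis
    using False by (simp add: powr_realpow)
qed

lemma integrable_gauss1_abs_powr:
  assumes "0 \<le> q"
  shows "integrable gauss1 (\<lambda>x. \<bar>x\<bar> powr q)"
proof -
  let ?n = "nat \<lceil>q\<rceil>"
  have "integrable lborel (\<lambda>x. std_normal_density x * \<bar>x\<bar> ^ 0 + std_normal_density x * \<bar>x\<bar> ^ ?n)"
    by (intro Bochner_Integration.integrable_add integrable_std_normal_moment_abs)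
  then have "integrable lborel (\<lambda>x. std_normal_density x * (1 + \<bar>x\<bar> ^ ?n))"
    by (simp add: distrib_left)
  then have "integrable lborel (\<lambda>x. std_normal_density x * \<bar>x\<bar> powr q)"
    by (rule Bochner_Integration.integrable_bound)
       (auto simp: abs_mult normal_density_nonneg
             intro!: mult_left_mono abs_powr_le_one_plus_power assms)
  then show ?thesis
    unfolding gauss1_def by (subst integrable_density) (auto simp: normal_density_nonneg)
qed

lemma nn_integral_gauss1_abs_powr:
  assumes "0 \<le> q"
  shows "(\<integral>\<^sup>+x. ennreal (\<bar>x\<bar> powr q) \<partial>gauss1) = ennreal (sigma_q_pow 1 q)"
  unfolding sigma_q_pow_def
  by (simp add: nn_integral_eq_integral integrable_gauss1_abs_powr[OF assms])

lemma sigma_q_pow_nonneg [simp]: "0 \<le> sigma_q_pow \<sigma> q"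
  unfolding sigma_q_pow_def by simp

lemma sigma_q_pow_pos:
  assumes "0 \<le> q"
  shows "0 < sigma_q_pow 1 q"
proof -
  have "sigma_q_pow 1 q \<noteq> 0"
  proof
    assume "sigma_q_pow 1 q = 0"
    then have "AE x in gauss1. \<bar>x\<bar> powr q = 0"
      unfolding sigma_q_pow_def
      by (subst (asm) integral_nonneg_eq_0_iff_AE) (auto simp: integrable_gauss1_abs_powr[OF assms])
    then have "AE x in lborel. 0 < std_normal_density x \<longrightarrow> x = 0"
      unfolding gauss1_def by (subst (asm) AE_density) auto
    then have "AE x in lborel. (x::real) = 0"
      by (simp add: std_normal_density_def)
    then have "AE x in lborel. x = 0 \<and> x \<noteq> (0::real)"
      using AE_lborel_singleton[of "0::real"] by (rule AE_conjI)
    then have "ae_filter (lborel :: real measure) = bot"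
      using trivial_limit_def by auto
    then show False
      by (simp add: ae_filter_eq_bot_iff)
  qed
  then show ?thesis
    using sigma_q_pow_nonneg[of 1 q] by linarith
qed

lemma sigma_q_pow_scale:
  assumes "0 < \<sigma>"
  shows "sigma_q_pow \<sigma> q = \<sigma> powr q * sigma_q_pow 1 q"
  unfolding sigma_q_pow_def using assms by (simp add: abs_mult powr_mult)

lemma powr_le_powr_mult_exp:
  fixes y k :: real
  assumes "0 \<le> y" "0 < k"
  shows "y powr k \<le> k powr k * exp y"
proof (cases "y = 0")
  case False
  with assms have "ln (y / k) \<le> y / k - 1"
    by (intro ln_le_minus_one) simp
  with False assms have "k * ln y \<le> k * ln k + y"
    by (simp add: ln_div divide_simps algebra_simps)
  with False assms show ?thesis
    by (simp add: powr_def flip: exp_add)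
qed (use assms in simp)

lemma powr_eq_sq_powr_half:
  fixes x q :: real
  assumes "0 \<le> x"
  shows "x powr q = (x\<^sup>2) powr (q / 2)"
proof (cases "x = 0")
  case False
  with assms have "x\<^sup>2 = x powr 2"
    by (simp add: powr_realpow)
  then show ?thesis
    by (simp add: powr_powr)
qed simp

lemma powr_mult_exp_neg_sq_le:
  fixes c q d :: real
  assumes "0 \<le> c" "0 < q" "0 < d"
  shows "c powr q * exp (- c\<^sup>2 / d) \<le> (d * q / 2) powr (q / 2)"
proof -
  have "c powr q = (c\<^sup>2 / d) powr (q / 2) * d powr (q / 2)"
    using assms by (simp add: powr_eq_sq_powr_half[of c q] flip: powr_mult)
  also have "\<dots> \<le> (q / 2) powr (q / 2) * exp (c\<^sup>2 / d) * d powr (q / 2)"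
    using assms by (intro mult_right_mono powr_le_powr_mult_exp) auto
  also have "\<dots> = (d * q / 2) powr (q / 2) * exp (c\<^sup>2 / d)"
    using assms powr_mult[of d "q / 2" "q / 2"] by (simp add: mult_ac)
  finally show ?thesis
    by (simp add: exp_minus field_simps)
qed

lemma powr_add_le:
  fixes x y q :: real
  assumes "0 \<le> x" "0 \<le> y" "0 \<le> q"
  shows "(x + y) powr q \<le> 2 powr q * (x powr q + y powr q)"
proof -
  have "(x + y) powr q \<le> (2 * max x y) powr q"
    using assms by (intro powr_mono2) auto
  also have "\<dots> = 2 powr q * max x y powr q"
    using assms by (simp add: powr_mult)
  also have "max x y powr q \<le> x powr q + y powr q"
    by (simp add: max_def)
  finally show ?thesis by simp
qed

section \<open>Hard thresholding of one Gaussian observation\<close>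

definition hard_threshold :: "real \<Rightarrow> real \<Rightarrow> real" where
  "hard_threshold t y = (if t \<le> \<bar>y\<bar> then y else 0)"

definition threshold_risk :: "real \<Rightarrow> real \<Rightarrow> real \<Rightarrow> ennreal" where
  "threshold_risk q t c = (\<integral>\<^sup>+x. ennreal (\<bar>hard_threshold t (c + x) - c\<bar> powr q) \<partial>gauss1)"

lemma measurable_hard_threshold [measurable]: "hard_threshold t \<in> borel_measurable borel"
  unfolding hard_threshold_def by measurable

lemma threshold_risk_le_miss:
  assumes "0 \<le> q"
  shows "threshold_risk q t c
           \<le> ennreal (sigma_q_pow 1 q) + ennreal (\<bar>c\<bar> powr q) * emeasure gauss1 {x. \<bar>c + x\<bar> < t}"
proof -
  have "threshold_risk q t c
          \<le> (\<integral>\<^sup>+x. ennreal (\<bar>x\<bar> powr q) + ennreal (\<bar>c\<bar> powr q) * indicator {x. \<bar>c + x\<bar> < t} x \<partial>gauss1)"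
    unfolding threshold_risk_def hard_threshold_def
    by (intro nn_integral_mono) (auto simp: indicator_def)
  also have "\<dots> = ennreal (sigma_q_pow 1 q) + ennreal (\<bar>c\<bar> powr q) * emeasure gauss1 {x. \<bar>c + x\<bar> < t}"
    by (subst nn_integral_add)
       (simp_all add: nn_integral_gauss1_abs_powr[OF assms] nn_integral_cmult_indicator)
  finally show ?thesis .
qed

lemma emeasure_gauss1_miss_le:
  assumes "t \<le> \<bar>c\<bar>"
  shows "emeasure gauss1 {x. \<bar>c + x\<bar> < t} \<le> ennreal (2 * exp (- (\<bar>c\<bar> - t)\<^sup>2 / 2))"
proof -
  have "emeasure gauss1 {x. \<bar>c + x\<bar> < t} \<le> emeasure gauss1 {x. \<bar>c\<bar> - t \<le> \<bar>x\<bar>}"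
    by (intro emeasure_mono) auto
  also have "\<dots> \<le> ennreal (2 * exp (- (\<bar>c\<bar> - t)\<^sup>2 / 2))"
    using assms by (intro emeasure_gauss1_abs_ge_le) simp
  finally show ?thesis .
qed

lemma threshold_risk_zero_le:
  assumes "0 \<le> q" "0 \<le> t"
  shows "threshold_risk q t 0 \<le> ennreal (2 * 2 powr q * exp (- t\<^sup>2 / 2) * (t powr q + sigma_q_pow 1 q))"
proof -
  have "(\<integral>\<^sup>+u. ennreal ((t + \<bar>u\<bar>) powr q) \<partial>gauss1)
          \<le> (\<integral>\<^sup>+u. ennreal (2 powr q * t powr q) + ennreal (2 powr q) * ennreal (\<bar>u\<bar> powr q) \<partial>gauss1)"
    using assms powr_add_le[of t _ q]
    by (intro nn_integral_mono) (simp add: distrib_left flip: ennreal_plus ennreal_mult)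
  also have "\<dots> = ennreal (2 powr q * t powr q) + ennreal (2 powr q) * ennreal (sigma_q_pow 1 q)"
    by (subst nn_integral_add) (simp_all add: nn_integral_cmult nn_integral_gauss1_abs_powr[OF assms(1)])
  also have "\<dots> = ennreal (2 powr q * (t powr q + sigma_q_pow 1 q))"
    by (simp add: distrib_left ennreal_plus ennreal_mult)
  finally have shifted_moment:
    "(\<integral>\<^sup>+u. ennreal ((t + \<bar>u\<bar>) powr q) \<partial>gauss1) \<le> ennreal (2 powr q * (t powr q + sigma_q_pow 1 q))" .
  have "threshold_risk q t 0 = (\<integral>\<^sup>+x. ennreal (\<bar>x\<bar> powr q) * indicator {x. t \<le> \<bar>x\<bar>} x \<partial>gauss1)"
    unfolding threshold_risk_def hard_threshold_def
    by (intro nn_integral_cong) (simp add: indicator_def)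
  also have "\<dots> \<le> 2 * ennreal (exp (- t\<^sup>2 / 2)) * (\<integral>\<^sup>+u. ennreal ((t + \<bar>u\<bar>) powr q) \<partial>gauss1)"
    using nn_integral_gauss1_abs_tail_le[of "\<lambda>y. ennreal (y powr q)" t] assms by simp
  also have "\<dots> \<le> 2 * ennreal (exp (- t\<^sup>2 / 2)) * ennreal (2 powr q * (t powr q + sigma_q_pow 1 q))"
    using shifted_moment by (rule mult_left_mono) simp
  finally show ?thesis
    by (simp add: ennreal_mult mult_ac)
qed

lemma threshold_risk_le_signal:
  assumes "0 \<le> q"
  shows "threshold_risk q t c \<le> ennreal (sigma_q_pow 1 q + \<bar>c\<bar> powr q)"
proof -
  have "threshold_risk q t c
          \<le> ennreal (sigma_q_pow 1 q) + ennreal (\<bar>c\<bar> powr q) * emeasure gauss1 {x. \<bar>c + x\<bar> < t}"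
    using assms by (rule threshold_risk_le_miss)
  also have "\<dots> \<le> ennreal (sigma_q_pow 1 q) + ennreal (\<bar>c\<bar> powr q)"
    using prob_space.emeasure_le_1[OF prob_space_gauss1] by (intro add_left_mono mult_left_le) simp_all
  finally show ?thesis
    by (simp flip: ennreal_plus)
qed

lemma threshold_risk_le_tail:
  assumes "0 \<le> q" "t \<le> \<bar>c\<bar>"
  shows "threshold_risk q t c \<le> ennreal (sigma_q_pow 1 q + \<bar>c\<bar> powr q * (2 * exp (- (\<bar>c\<bar> - t)\<^sup>2 / 2)))"
proof -
  have "threshold_risk q t c
          \<le> ennreal (sigma_q_pow 1 q) + ennreal (\<bar>c\<bar> powr q) * emeasure gauss1 {x. \<bar>c + x\<bar> < t}"
    using assms(1) by (rule threshold_risk_le_miss)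
  also have "\<dots> \<le> ennreal (sigma_q_pow 1 q) + ennreal (\<bar>c\<bar> powr q) * ennreal (2 * exp (- (\<bar>c\<bar> - t)\<^sup>2 / 2))"
    using assms(2) by (intro add_left_mono mult_left_mono emeasure_gauss1_miss_le) simp_all
  finally show ?thesis
    by (simp flip: ennreal_plus ennreal_mult)
qed

lemma threshold_risk_le_uniform:
  assumes "0 < q" "0 \<le> t"
  shows "threshold_risk q t c \<le> ennreal (sigma_q_pow 1 q + 2 * (4 * q) powr (q / 2) + 2 powr q * t powr q)"
proof (cases "2 * t \<le> \<bar>c\<bar>")
  case True
  then have "\<bar>c\<bar>\<^sup>2 \<le> (2 * (\<bar>c\<bar> - t))\<^sup>2"
    by (intro power_mono) auto
  then have "exp (- (\<bar>c\<bar> - t)\<^sup>2 / 2) \<le> exp (- \<bar>c\<bar>\<^sup>2 / 8)"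
    unfolding power_mult_distrib by simp
  then have "\<bar>c\<bar> powr q * (2 * exp (- (\<bar>c\<bar> - t)\<^sup>2 / 2)) \<le> 2 * (\<bar>c\<bar> powr q * exp (- \<bar>c\<bar>\<^sup>2 / 8))"
    by (simp add: mult_left_mono)
  also have "\<dots> \<le> 2 * (4 * q) powr (q / 2)"
    using powr_mult_exp_neg_sq_le[of "\<bar>c\<bar>" q 8] assms by simp
  finally have signal_term: "\<bar>c\<bar> powr q * (2 * exp (- (\<bar>c\<bar> - t)\<^sup>2 / 2)) \<le> 2 * (4 * q) powr (q / 2)" .
  have "threshold_risk q t c \<le> ennreal (sigma_q_pow 1 q + \<bar>c\<bar> powr q * (2 * exp (- (\<bar>c\<bar> - t)\<^sup>2 / 2)))"
    using True assms by (intro threshold_risk_le_tail) auto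
  also have "\<dots> \<le> ennreal (sigma_q_pow 1 q + 2 * (4 * q) powr (q / 2) + 2 powr q * t powr q)"
    using signal_term mult_nonneg_nonneg[OF powr_ge_zero powr_ge_zero, of 2 q t q]
    by (intro ennreal_leI) linarith
  finally show ?thesis .
next
  case False
  then have "\<bar>c\<bar> powr q \<le> (2 * t) powr q"
    using assms by (intro powr_mono2) auto
  then have "\<bar>c\<bar> powr q \<le> 2 powr q * t powr q"
    using assms by (simp add: powr_mult)
  then have "ennreal (sigma_q_pow 1 q + \<bar>c\<bar> powr q)
               \<le> ennreal (sigma_q_pow 1 q + 2 * (4 * q) powr (q / 2) + 2 powr q * t powr q)"
    using powr_ge_zero[of "4 * q" "q / 2"] by (intro ennreal_leI) linarith
  with threshold_risk_le_signal[of q t c] assms(1) show ?thesis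
    by (meson order_trans less_imp_le)
qed

lemma threshold_risk_le_large:
  assumes "0 < q" "0 \<le> t" "t \<le> \<bar>c\<bar>"
  shows "threshold_risk q t c
           \<le> ennreal (sigma_q_pow 1 q + 2 * 2 powr q * (t powr q * exp (- (\<bar>c\<bar> - t)\<^sup>2 / 2) + q powr (q / 2)))"
proof -
  define S where "S = \<bar>c\<bar> - t"
  have "0 \<le> S"
    using assms by (simp add: S_def)
  have "\<bar>c\<bar> powr q \<le> 2 powr q * (t powr q + S powr q)"
    using powr_add_le[of t S q] assms \<open>0 \<le> S\<close> by (simp add: S_def)
  then have "\<bar>c\<bar> powr q * (2 * exp (- S\<^sup>2 / 2)) \<le> 2 powr q * (t powr q + S powr q) * (2 * exp (- S\<^sup>2 / 2))"
    by (rule mult_right_mono) simp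
  also have "\<dots> = 2 * 2 powr q * (t powr q * exp (- S\<^sup>2 / 2) + S powr q * exp (- S\<^sup>2 / 2))"
    by (simp add: algebra_simps)
  also have "\<dots> \<le> 2 * 2 powr q * (t powr q * exp (- S\<^sup>2 / 2) + q powr (q / 2))"
    using powr_mult_exp_neg_sq_le[OF \<open>0 \<le> S\<close> assms(1), of 2] by simp
  finally have signal_term:
    "\<bar>c\<bar> powr q * (2 * exp (- S\<^sup>2 / 2)) \<le> 2 * 2 powr q * (t powr q * exp (- S\<^sup>2 / 2) + q powr (q / 2))" .
  have "threshold_risk q t c \<le> ennreal (sigma_q_pow 1 q + \<bar>c\<bar> powr q * (2 * exp (- S\<^sup>2 / 2)))"
    using assms threshold_risk_le_tail[of q t c] by (simp add: S_def)
  also have "\<dots> \<le> ennreal (sigma_q_pow 1 q + 2 * 2 powr q * (t powr q * exp (- S\<^sup>2 / 2) + q powr (q / 2)))"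
    using signal_term by (intro ennreal_leI) simp
  finally show ?thesis
    by (simp add: S_def)
qed

section \<open>The threshold at unit noise level\<close>

definition unit_threshold :: "real \<Rightarrow> real \<Rightarrow> real" where
  "unit_threshold q r = sqrt (2 * ln r + q * ln (ln r))"

lemma tstar_eq_unit_threshold:
  assumes "0 \<le> \<sigma>"
  shows "tstar p s \<sigma> q = \<sigma> * unit_threshold q (real p / real s - 1)"
proof -
  have "2 * \<sigma>\<^sup>2 * ln (real p / real s - 1) + \<sigma>\<^sup>2 * q * ln (ln (real p / real s - 1))
          = \<sigma>\<^sup>2 * (2 * ln (real p / real s - 1) + q * ln (ln (real p / real s - 1)))"
    by (simp add: algebra_simps)
  then show ?thesis
    unfolding tstar_def unit_threshold_def using assms by (simp add: real_sqrt_mult)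
qed

lemma a_q1_eq_unit_threshold:
  assumes "0 \<le> \<sigma>"
  shows "a_q1 p s \<sigma> q = \<sigma> * (unit_threshold q (real p / real s - 1)
                                  + sqrt (q * ln (ln (real p / real s - 1))))"
proof -
  define r where "r = real p / real s - 1"
  have "2 * \<sigma>\<^sup>2 * ln r + q * \<sigma>\<^sup>2 * ln (ln r) = \<sigma>\<^sup>2 * (2 * ln r + q * ln (ln r))"
    and "q * \<sigma>\<^sup>2 * ln (ln r) = \<sigma>\<^sup>2 * (q * ln (ln r))"
    by (simp_all add: algebra_simps)
  note factored = this
  show ?thesis
    unfolding a_q1_def unit_threshold_def r_def[symmetric]
    unfolding factored(1) unfolding factored(2) real_sqrt_mult
    using assms by (simp add: distrib_left)
qed

lemma one_le_ln_if_exp_one_le: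
  fixes r :: real
  assumes "exp 1 \<le> r"
  shows "1 \<le> ln r"
  using assms by (subst ln_ge_iff) (auto intro: order_less_le_trans[OF exp_gt_zero])

lemma unit_threshold_nonneg:
  assumes "exp 1 \<le> r" "0 \<le> q"
  shows "0 \<le> unit_threshold q r"
proof -
  have "1 \<le> ln r"
    using assms(1) by (rule one_le_ln_if_exp_one_le)
  then have "0 \<le> 2 * ln r + q * ln (ln r)"
    using assms(2) by (intro add_nonneg_nonneg mult_nonneg_nonneg) auto
  then show ?thesis
    unfolding unit_threshold_def by simp
qed

lemma unit_threshold_sq:
  assumes "exp 1 \<le> r" "0 \<le> q"
  shows "(unit_threshold q r)\<^sup>2 = 2 * ln r + q * ln (ln r)"
  using unit_threshold_nonneg[OF assms] unfolding unit_threshold_def by simp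

lemma exp_neg_unit_threshold_sq:
  assumes "exp 1 \<le> r" "0 \<le> q"
  shows "exp (- (unit_threshold q r)\<^sup>2 / 2) = ln r powr (- q / 2) / r"
proof -
  have "0 < r" "1 \<le> ln r"
    using assms(1) one_le_ln_if_exp_one_le by (auto intro: order_less_le_trans[OF exp_gt_zero])
  then have "r \<noteq> 1"
    by (metis ln_one not_one_le_zero)
  with \<open>0 < r\<close> \<open>1 \<le> ln r\<close> have "exp (- (2 * ln r + q * ln (ln r)) / 2) = exp (- ln r) * exp (- q / 2 * ln (ln r))"
    by (simp add: field_simps flip: exp_add)
  also have "\<dots> = ln r powr (- q / 2) / r"
    using \<open>0 < r\<close> \<open>r \<noteq> 1\<close> \<open>1 \<le> ln r\<close> by (simp add: exp_minus powr_def field_simps)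
  finally show ?thesis
    using unit_threshold_sq[OF assms] by simp
qed

lemma unit_threshold_powr_le:
  assumes "exp 1 \<le> r" "0 \<le> q"
  shows "unit_threshold q r powr q \<le> (2 + q) powr (q / 2) * ln r powr (q / 2)"
proof -
  have "1 \<le> ln r"
    using assms(1) by (rule one_le_ln_if_exp_one_le)
  then have "q * ln (ln r) \<le> q * ln r"
    using assms(2) by (intro mult_left_mono) (auto intro: ln_bound)
  then have "(unit_threshold q r)\<^sup>2 \<le> (2 + q) * ln r"
    using unit_threshold_sq[OF assms] by (simp add: algebra_simps)
  then have "((unit_threshold q r)\<^sup>2) powr (q / 2) \<le> ((2 + q) * ln r) powr (q / 2)"
    using assms(2) by (intro powr_mono2) auto
  then show ?thesis
    using \<open>1 \<le> ln r\<close> assms(2) unit_threshold_nonneg[OF assms]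
    by (simp add: powr_mult flip: powr_eq_sq_powr_half)
qed

lemma unit_threshold_powr_mult_le:
  assumes "exp 1 \<le> r" "0 \<le> q"
  shows "unit_threshold q r powr q * ln r powr (- q / 2) \<le> (2 + q) powr (q / 2)"
proof -
  have "0 < ln r"
    using one_le_ln_if_exp_one_le[OF assms(1)] by simp
  have "unit_threshold q r powr q * ln r powr (- q / 2)
          \<le> (2 + q) powr (q / 2) * ln r powr (q / 2) * ln r powr (- q / 2)"
    using unit_threshold_powr_le[OF assms] by (rule mult_right_mono) simp
  also have "\<dots> = (2 + q) powr (q / 2)"
    using \<open>0 < ln r\<close> by (simp add: mult.assoc flip: powr_add)
  finally show ?thesis .
qed

lemma threshold_risk_unit_threshold_zero_le:
  assumes "exp 1 \<le> r" "0 \<le> q"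
  shows "threshold_risk q (unit_threshold q r) 0
           \<le> ennreal (2 * 2 powr q * ((2 + q) powr (q / 2) + sigma_q_pow 1 q) / r)"
proof -
  define T where "T = unit_threshold q r"
  define M where "M = sigma_q_pow 1 q"
  have "0 < r" "1 \<le> ln r"
    using assms(1) one_le_ln_if_exp_one_le by (auto intro: order_less_le_trans[OF exp_gt_zero])
  have "0 \<le> M"
    by (simp add: M_def)
  have "ln r powr (- q / 2) \<le> 1"
    using powr_mono[of "- q / 2" 0 "ln r"] \<open>1 \<le> ln r\<close> assms(2) by simp
  have "T powr q * ln r powr (- q / 2) + M * ln r powr (- q / 2) \<le> (2 + q) powr (q / 2) + M"
    using unit_threshold_powr_mult_le[OF assms] \<open>ln r powr (- q / 2) \<le> 1\<close> \<open>0 \<le> M\<close>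
    by (intro add_mono) (simp_all add: T_def mult_left_le)
  then have "2 * 2 powr q * (T powr q * ln r powr (- q / 2) + M * ln r powr (- q / 2)) / r
               \<le> 2 * 2 powr q * ((2 + q) powr (q / 2) + M) / r"
    using \<open>0 < r\<close> by (intro divide_right_mono mult_left_mono) simp_all
  moreover have "threshold_risk q T 0 \<le> ennreal (2 * 2 powr q * exp (- T\<^sup>2 / 2) * (T powr q + M))"
    using threshold_risk_zero_le[OF assms(2) unit_threshold_nonneg[OF assms]] by (simp add: T_def M_def)
  moreover have "2 * 2 powr q * exp (- T\<^sup>2 / 2) * (T powr q + M)
                   = 2 * 2 powr q * (T powr q * ln r powr (- q / 2) + M * ln r powr (- q / 2)) / r"
    using exp_neg_unit_threshold_sq[OF assms] by (simp add: T_def algebra_simps)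
  ultimately show ?thesis
    by (metis T_def M_def ennreal_leI order_trans)
qed

lemma threshold_risk_unit_threshold_le_log:
  assumes "exp 1 \<le> r" "0 < q"
  shows "threshold_risk q (unit_threshold q r) c
           \<le> ennreal (sigma_q_pow 1 q + 2 * (4 * q) powr (q / 2) + 2 powr q * (2 + q) powr (q / 2) * ln r powr (q / 2))"
proof -
  have "threshold_risk q (unit_threshold q r) c
          \<le> ennreal (sigma_q_pow 1 q + 2 * (4 * q) powr (q / 2) + 2 powr q * unit_threshold q r powr q)"
    using assms by (intro threshold_risk_le_uniform unit_threshold_nonneg) simp_all
  also have "\<dots> \<le> ennreal (sigma_q_pow 1 q + 2 * (4 * q) powr (q / 2) + 2 powr q * (2 + q) powr (q / 2) * ln r powr (q / 2))"
    using unit_threshold_powr_le[of r q] assms by (intro ennreal_leI) (simp add: mult.assoc)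
  finally show ?thesis .
qed

lemma threshold_risk_unit_threshold_le_large:
  assumes "exp 1 \<le> r" "0 < q" "unit_threshold q r + sqrt (q * ln (ln r)) \<le> \<bar>c\<bar>"
  shows "threshold_risk q (unit_threshold q r) c
           \<le> ennreal (sigma_q_pow 1 q + 2 * 2 powr q * ((2 + q) powr (q / 2) + q powr (q / 2)))"
proof -
  define T where "T = unit_threshold q r"
  have "1 \<le> ln r"
    using assms(1) by (rule one_le_ln_if_exp_one_le)
  then have "0 \<le> q * ln (ln r)"
    using assms(2) ln_ge_zero[of "ln r"] by simp
  have "sqrt (q * ln (ln r)) \<le> \<bar>c\<bar> - T"
    using assms(3) by (simp add: T_def)
  then have "T \<le> \<bar>c\<bar>"
    using real_sqrt_ge_zero[OF \<open>0 \<le> q * ln (ln r)\<close>] by linarith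
  have "(sqrt (q * ln (ln r)))\<^sup>2 \<le> (\<bar>c\<bar> - T)\<^sup>2"
    using \<open>sqrt (q * ln (ln r)) \<le> \<bar>c\<bar> - T\<close> \<open>0 \<le> q * ln (ln r)\<close> by (intro power_mono) simp_all
  then have "q * ln (ln r) \<le> (\<bar>c\<bar> - T)\<^sup>2"
    using \<open>0 \<le> q * ln (ln r)\<close> by simp
  then have "exp (- (\<bar>c\<bar> - T)\<^sup>2 / 2) \<le> ln r powr (- q / 2)"
    using \<open>1 \<le> ln r\<close> by (simp add: powr_def)
  then have "T powr q * exp (- (\<bar>c\<bar> - T)\<^sup>2 / 2) \<le> T powr q * ln r powr (- q / 2)"
    by (rule mult_left_mono) simp
  also have "\<dots> \<le> (2 + q) powr (q / 2)"
    using unit_threshold_powr_mult_le[of r q] assms by (simp add: T_def)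
  finally have threshold_term: "T powr q * exp (- (\<bar>c\<bar> - T)\<^sup>2 / 2) \<le> (2 + q) powr (q / 2)" .
  have "threshold_risk q T c
          \<le> ennreal (sigma_q_pow 1 q + 2 * 2 powr q * (T powr q * exp (- (\<bar>c\<bar> - T)\<^sup>2 / 2) + q powr (q / 2)))"
    using assms \<open>T \<le> \<bar>c\<bar>\<close> unit_threshold_nonneg[of r q]
    by (intro threshold_risk_le_large) (simp_all add: T_def)
  also have "\<dots> \<le> ennreal (sigma_q_pow 1 q + 2 * 2 powr q * ((2 + q) powr (q / 2) + q powr (q / 2)))"
    using threshold_term by (intro ennreal_leI add_left_mono mult_left_mono add_right_mono) simp_all
  finally show ?thesis
    by (simp add: T_def)
qed

section \<open>Risk of the thresholding estimator\<close>

lemma nn_integral_gaussp_component: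
  assumes [measurable]: "h \<in> borel_measurable borel" and "j < p"
  shows "(\<integral>\<^sup>+\<xi>. h (\<xi> j) \<partial>gaussp p) = (\<integral>\<^sup>+x. h x \<partial>gauss1)"
proof -
  have "distr (gaussp p) gauss1 (\<lambda>\<xi>. \<xi> j) = gauss1"
    unfolding gaussp_def using assms(2) prob_space_gauss1 by (intro distr_PiM_component) auto
  then have "(\<integral>\<^sup>+x. h x \<partial>gauss1) = (\<integral>\<^sup>+x. h x \<partial>distr (gaussp p) gauss1 (\<lambda>\<xi>. \<xi> j))"
    by simp
  also have "\<dots> = (\<integral>\<^sup>+\<xi>. h (\<xi> j) \<partial>gaussp p)"
    using assms(2) by (intro nn_integral_distr) (auto simp: gaussp_def)
  finally show ?thesis ..
qed

lemma hard_threshold_scale: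
  assumes "0 < \<sigma>"
  shows "\<bar>hard_threshold (\<sigma> * t) (b + \<sigma> * x) - b\<bar> = \<sigma> * \<bar>hard_threshold t (b / \<sigma> + x) - b / \<sigma>\<bar>"
proof -
  have "b + \<sigma> * x = \<sigma> * (b / \<sigma> + x)"
    using assms by (simp add: field_simps)
  then have "\<sigma> * t \<le> \<bar>b + \<sigma> * x\<bar> \<longleftrightarrow> t \<le> \<bar>b / \<sigma> + x\<bar>"
    using assms by (simp add: abs_mult)
  then show ?thesis
    unfolding hard_threshold_def using assms by (simp add: abs_mult abs_divide)
qed

lemma risk_eq_sum_threshold_risk:
  assumes "0 < \<sigma>"
  shows "risk p s \<sigma> q \<beta> = ennreal (\<sigma> powr q) * (\<Sum>j<p. threshold_risk q (tstar p s \<sigma> q / \<sigma>) (\<beta> j / \<sigma>))"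
proof -
  define t where "t = tstar p s \<sigma> q / \<sigma>"
  have coordinate: "\<bar>beta_hat p s \<sigma> q (\<lambda>i. \<beta> i + \<sigma> * \<xi> i) j - \<beta> j\<bar> powr q
                      = \<sigma> powr q * \<bar>hard_threshold t (\<beta> j / \<sigma> + \<xi> j) - \<beta> j / \<sigma>\<bar> powr q" for \<xi> j
  proof -
    have "tstar p s \<sigma> q = \<sigma> * t"
      using assms by (simp add: t_def)
    then show ?thesis
      using hard_threshold_scale[OF assms, of t "\<beta> j" "\<xi> j"] assms
      by (simp add: beta_hat_def hard_threshold_def powr_mult)
  qed
  have "risk p s \<sigma> q \<beta>
          = (\<integral>\<^sup>+\<xi>. (\<Sum>j<p. ennreal (\<sigma> powr q) * ennreal (\<bar>hard_threshold t (\<beta> j / \<sigma> + \<xi> j) - \<beta> j / \<sigma>\<bar> powr q)) \<partial>gaussp p)"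
    unfolding risk_def coordinate
    by (intro nn_integral_cong) (simp add: sum_ennreal ennreal_mult' flip: sum_distrib_left)
  also have "\<dots> = (\<Sum>j<p. \<integral>\<^sup>+\<xi>. ennreal (\<sigma> powr q) * ennreal (\<bar>hard_threshold t (\<beta> j / \<sigma> + \<xi> j) - \<beta> j / \<sigma>\<bar> powr q) \<partial>gaussp p)"
    by (rule nn_integral_sum) (simp add: gaussp_def)
  also have "\<dots> = (\<Sum>j<p. ennreal (\<sigma> powr q) * (\<integral>\<^sup>+\<xi>. ennreal (\<bar>hard_threshold t (\<beta> j / \<sigma> + \<xi> j) - \<beta> j / \<sigma>\<bar> powr q) \<partial>gaussp p))"
    by (intro sum.cong refl nn_integral_cmult) (simp add: gaussp_def)
  also have "\<dots> = ennreal (\<sigma> powr q) * (\<Sum>j<p. threshold_risk q t (\<beta> j / \<sigma>))"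
    unfolding threshold_risk_def sum_distrib_left
    by (intro sum.cong refl arg_cong[where f = "(*) _"] nn_integral_gaussp_component) simp_all
  finally show ?thesis
    by (simp add: t_def)
qed

lemma sum_le_sparse:
  fixes f :: "'a \<Rightarrow> ennreal"
  assumes "finite I" "D \<subseteq> I" "card D \<le> s"
    and "\<And>j. j \<in> D \<Longrightarrow> f j \<le> B" "\<And>j. j \<in> I - D \<Longrightarrow> f j \<le> Z"
  shows "sum f I \<le> of_nat s * B + of_nat (card I) * Z"
proof -
  have "sum f I = sum f D + sum f (I - D)"
    using assms(1,2) by (metis add.commute sum.subset_diff)
  also have "\<dots> \<le> of_nat (card D) * B + of_nat (card (I - D)) * Z"
    using assms(4,5) by (intro add_mono sum_bounded_above) auto
  also have "\<dots> \<le> of_nat s * B + of_nat (card I) * Z"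
    using assms(1-3) by (intro add_mono mult_right_mono) (simp_all add: card_mono)
  finally show ?thesis .
qed

lemma sparsity_ratio_bounds:
  assumes "1 \<le> s" "real s < real p / 4"
  shows "exp 1 \<le> real p / real s - 1" "real p \<le> 2 * real s * (real p / real s - 1)"
proof -
  have "0 < real s"
    using assms(1) by simp
  then have "3 < real p / real s - 1"
    using assms(2) by (simp add: field_simps)
  then show "exp 1 \<le> real p / real s - 1"
    using exp_le by linarith
  show "real p \<le> 2 * real s * (real p / real s - 1)"
    using \<open>0 < real s\<close> assms(2) by (simp add: field_simps)
qed

lemma risk_le_of_support_bound:
  assumes "1 \<le> s" "real s < real p / 4" "0 < \<sigma>" "0 \<le> q" "\<beta> \<in> Omega p s a" "0 \<le> B"
    and support: "\<And>c. a / \<sigma> \<le> \<bar>c\<bar> \<Longrightarrow> threshold_risk q (unit_threshold q (real p / real s - 1)) c \<le> ennreal B"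
  shows "risk p s \<sigma> q \<beta> \<le> ennreal (\<sigma> powr q * real s * (B + 4 * 2 powr q * ((2 + q) powr (q / 2) + sigma_q_pow 1 q)))"
proof -
  define r where "r = real p / real s - 1"
  define K where "K = 2 * 2 powr q * ((2 + q) powr (q / 2) + sigma_q_pow 1 q)"
  define D where "D = {i \<in> {..<p}. \<beta> i \<noteq> 0}"
  have "exp 1 \<le> r" "real p \<le> 2 * real s * r"
    using sparsity_ratio_bounds[OF assms(1,2)] by (simp_all add: r_def)
  then have "0 < r"
    by (meson exp_gt_zero order_less_le_trans)
  have "0 \<le> K"
    by (simp add: K_def)
  have "(\<Sum>j<p. threshold_risk q (unit_threshold q r) (\<beta> j / \<sigma>))
          \<le> of_nat s * ennreal B + of_nat (card {..<p}) * ennreal (K / r)"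
  proof (rule sum_le_sparse[where D = D])
    show "card D \<le> s"
      using assms(5) by (simp add: Omega_def D_def)
    show "threshold_risk q (unit_threshold q r) (\<beta> j / \<sigma>) \<le> ennreal B" if "j \<in> D" for j
      using that assms(3,5) by (intro support[folded r_def]) (auto simp: Omega_def D_def divide_right_mono)
    show "threshold_risk q (unit_threshold q r) (\<beta> j / \<sigma>) \<le> ennreal (K / r)" if "j \<in> {..<p} - D" for j
      using that threshold_risk_unit_threshold_zero_le[OF \<open>exp 1 \<le> r\<close>] assms(4) by (simp add: D_def K_def)
  qed (auto simp: D_def)
  also have "\<dots> = ennreal (real s * B + real p * (K / r))"
    using assms(6) \<open>0 \<le> K\<close> \<open>0 < r\<close>
    by (simp add: ennreal_of_nat_eq_real_of_nat del: times_divide_eq_right flip: ennreal_plus ennreal_mult)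
  also have "\<dots> \<le> ennreal (real s * (B + 2 * K))"
    using \<open>real p \<le> 2 * real s * r\<close> \<open>0 < r\<close> \<open>0 \<le> K\<close>
    by (intro ennreal_leI) (simp add: field_simps mult_left_mono)
  finally have "risk p s \<sigma> q \<beta> \<le> ennreal (\<sigma> powr q) * ennreal (real s * (B + 2 * K))"
    using risk_eq_sum_threshold_risk[OF assms(3), of p s q \<beta>] tstar_eq_unit_threshold[of \<sigma> p s q] assms(3)
    by (simp add: r_def mult_left_mono)
  then show ?thesis
    by (simp add: K_def ennreal_mult' mult.assoc)
qed

lemma risk_le_large_signal:
  assumes "0 < q"
  obtains C where "\<And>p s \<sigma> a \<beta>. 1 \<le> s \<Longrightarrow> real s < real p / 4 \<Longrightarrow> 0 < \<sigma> \<Longrightarrow> \<beta> \<in> Omega p s a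
                     \<Longrightarrow> a_q1 p s \<sigma> q \<le> a \<Longrightarrow> risk p s \<sigma> q \<beta> \<le> ennreal (C * (sigma_q_pow \<sigma> q * real s))"
proof
  define M where "M = sigma_q_pow 1 q"
  define B where "B = M + 2 * 2 powr q * ((2 + q) powr (q / 2) + q powr (q / 2))"
  define K where "K = 4 * 2 powr q * ((2 + q) powr (q / 2) + M)"
  have "0 < M"
    using sigma_q_pow_pos assms by (simp add: M_def)
  fix p s :: nat and \<sigma> a :: real and \<beta>
  assume s: "1 \<le> s" "real s < real p / 4" and "0 < \<sigma>" "\<beta> \<in> Omega p s a" and large: "a_q1 p s \<sigma> q \<le> a"
  define r where "r = real p / real s - 1"
  have "exp 1 \<le> r"
    using sparsity_ratio_bounds(1)[OF s] by (simp add: r_def)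
  have "threshold_risk q (unit_threshold q r) c \<le> ennreal B" if "a / \<sigma> \<le> \<bar>c\<bar>" for c
  proof -
    have "a_q1 p s \<sigma> q / \<sigma> \<le> \<bar>c\<bar>"
      using large that \<open>0 < \<sigma>\<close> by (meson divide_right_mono order_trans less_imp_le)
    then have "unit_threshold q r + sqrt (q * ln (ln r)) \<le> \<bar>c\<bar>"
      using a_q1_eq_unit_threshold[of \<sigma> p s q] \<open>0 < \<sigma>\<close> by (simp add: r_def)
    then show ?thesis
      using threshold_risk_unit_threshold_le_large[OF \<open>exp 1 \<le> r\<close>] assms by (simp add: B_def M_def)
  qed
  then have "risk p s \<sigma> q \<beta> \<le> ennreal (\<sigma> powr q * real s * (B + K))"
    using risk_le_of_support_bound[OF s \<open>0 < \<sigma>\<close> less_imp_le[OF assms] \<open>\<beta> \<in> Omega p s a\<close>, of B] \<open>0 < M\<close>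
    by (simp add: r_def K_def M_def B_def)
  also have "\<dots> = ennreal ((B + K) / M * (sigma_q_pow \<sigma> q * real s))"
    using \<open>0 < M\<close> sigma_q_pow_scale[OF \<open>0 < \<sigma>\<close>] by (simp add: M_def mult_ac)
  finally show "risk p s \<sigma> q \<beta> \<le> ennreal ((B + K) / M * (sigma_q_pow \<sigma> q * real s))" .
qed

lemma risk_le_log:
  assumes "0 < q"
  obtains C where "\<And>p s \<sigma> a \<beta>. 1 \<le> s \<Longrightarrow> real s < real p / 4 \<Longrightarrow> 0 < \<sigma> \<Longrightarrow> \<beta> \<in> Omega p s a
                     \<Longrightarrow> risk p s \<sigma> q \<beta> \<le> ennreal (C * (real s * \<sigma> powr q * (2 * ln (real p / real s - 1)) powr (q / 2)))"
proof
  define M where "M = sigma_q_pow 1 q"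
  define B0 where "B0 = M + 2 * (4 * q) powr (q / 2)"
  define B1 where "B1 = 2 powr q * (2 + q) powr (q / 2)"
  define K where "K = 4 * 2 powr q * ((2 + q) powr (q / 2) + M)"
  fix p s :: nat and \<sigma> a :: real and \<beta>
  assume s: "1 \<le> s" "real s < real p / 4" and "0 < \<sigma>" "\<beta> \<in> Omega p s a"
  define L where "L = ln (real p / real s - 1)"
  have "1 \<le> L"
    using one_le_ln_if_exp_one_le[OF sparsity_ratio_bounds(1)[OF s]] by (simp add: L_def)
  have "threshold_risk q (unit_threshold q (real p / real s - 1)) c \<le> ennreal (B0 + B1 * L powr (q / 2))" for c
    using threshold_risk_unit_threshold_le_log[OF sparsity_ratio_bounds(1)[OF s], of q c] assms
    by (simp add: L_def B0_def B1_def M_def mult.assoc)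
  moreover have "0 \<le> B0 + B1 * L powr (q / 2)"
    by (simp add: B0_def B1_def M_def)
  ultimately have "risk p s \<sigma> q \<beta> \<le> ennreal (\<sigma> powr q * real s * (B0 + B1 * L powr (q / 2) + K))"
    using risk_le_of_support_bound[OF s \<open>0 < \<sigma>\<close> less_imp_le[OF assms] \<open>\<beta> \<in> Omega p s a\<close>, of "B0 + B1 * L powr (q / 2)"]
    by (simp add: K_def M_def)
  also have "\<dots> \<le> ennreal ((B0 + B1 + K) * (real s * \<sigma> powr q * (2 * L) powr (q / 2)))"
  proof (intro ennreal_leI)
    have "1 \<le> (2 * L) powr (q / 2)" "L powr (q / 2) \<le> (2 * L) powr (q / 2)"
      using \<open>1 \<le> L\<close> assms by (auto intro: ge_one_powr_ge_zero powr_mono2)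
    moreover have "0 \<le> B0" "0 \<le> B1" "0 \<le> K"
      by (simp_all add: B0_def B1_def K_def M_def)
    ultimately have "B0 * 1 + B1 * L powr (q / 2) + K * 1
                       \<le> B0 * (2 * L) powr (q / 2) + B1 * (2 * L) powr (q / 2) + K * (2 * L) powr (q / 2)"
      by (intro add_mono mult_left_mono)
    then have "B0 + B1 * L powr (q / 2) + K \<le> (B0 + B1 + K) * (2 * L) powr (q / 2)"
      by (simp add: distrib_right)
    then show "\<sigma> powr q * real s * (B0 + B1 * L powr (q / 2) + K)
                 \<le> (B0 + B1 + K) * (real s * \<sigma> powr q * (2 * L) powr (q / 2))"
      by (simp add: mult_left_mono mult_ac)
  qed
  finally show "risk p s \<sigma> q \<beta> \<le> ennreal ((B0 + B1 + K) * (real s * \<sigma> powr q * (2 * ln (real p / real s - 1)) powr (q / 2)))"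
    by (simp add: L_def)
qed

lemma Phi_ad_nonneg: "0 \<le> Phi_ad p s \<sigma> q a"
  unfolding Phi_ad_def by simp

theorem theorem12:
  fixes q :: real
  assumes "q \<ge> 1"
  shows "\<exists>C::real. \<forall>(p::nat) (s::nat) (\<sigma>::real) (a::real).
           s \<ge> 1 \<longrightarrow> real s < real p / 4 \<longrightarrow> \<sigma> > 0 \<longrightarrow> a > 0 \<longrightarrow>
           (\<forall>\<beta>\<in>Omega p s a. risk p s \<sigma> q \<beta> \<le> ennreal (C * Phi_ad p s \<sigma> q a))"
proof -
  have "0 < q"
    using assms by simp
  obtain C1 where large: "\<And>p s \<sigma> a \<beta>. 1 \<le> s \<Longrightarrow> real s < real p / 4 \<Longrightarrow> 0 < \<sigma> \<Longrightarrow> \<beta> \<in> Omega p s a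
      \<Longrightarrow> a_q1 p s \<sigma> q \<le> a \<Longrightarrow> risk p s \<sigma> q \<beta> \<le> ennreal (C1 * (sigma_q_pow \<sigma> q * real s))"
    using risk_le_large_signal[OF \<open>0 < q\<close>] by blast
  obtain C2 where log: "\<And>p s \<sigma> a \<beta>. 1 \<le> s \<Longrightarrow> real s < real p / 4 \<Longrightarrow> 0 < \<sigma> \<Longrightarrow> \<beta> \<in> Omega p s a
      \<Longrightarrow> risk p s \<sigma> q \<beta> \<le> ennreal (C2 * (real s * \<sigma> powr q * (2 * ln (real p / real s - 1)) powr (q / 2)))"
    using risk_le_log[OF \<open>0 < q\<close>] by blast
  have "risk p s \<sigma> q \<beta> \<le> ennreal (max C1 C2 * Phi_ad p s \<sigma> q a)"
    if "1 \<le> s" "real s < real p / 4" "0 < \<sigma>" "\<beta> \<in> Omega p s a" for p s \<sigma> a \<beta>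
  proof -
    have "\<exists>C \<in> {C1, C2}. risk p s \<sigma> q \<beta> \<le> ennreal (C * Phi_ad p s \<sigma> q a)"
      using large[OF that] log[OF that] by (cases "a_q1 p s \<sigma> q \<le> a") (auto simp: Phi_ad_def)
    then show ?thesis
      using Phi_ad_nonneg[of p s \<sigma> q a]
      by (auto elim!: order_trans intro!: ennreal_leI mult_right_mono)
  qed
  then show ?thesis
    by blast
qed

end
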